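(* Let $p>q$ be even positive integers and let $g_{i,j}\in\{1,-1\}$ for $i=1,\dots,q$ and $j=1,\dots,p-q$. Put $\eta_i'=\sigma_1^{g_{i,1}}\sigma_2^{g_{i,2}}\cdots\sigma_{p-q-1}^{g_{i,p-q-1}}$, $\eta_i=\eta_i'\,\sigma_{p-q}^{g_{i,p-q}}$, and \[\kappa_i=\sigma_{p-q+1}^{-1}\sigma_{p-q+2}^{-1}\cdots\sigma_{p-i}^{-1}\,\sigma_{p-i+1}\cdots\sigma_{p-1}\qquad(i=1,\dots,q),\] (so $\kappa_1=\sigma_{p-q+1}^{-1}\cdots\sigma_{p-1}^{-1}$ and $\kappa_q=\sigma_{p-q+1}\cdots\sigma_{p-1}$). Then \[\eta_1\kappa_1\eta_2\kappa_2\cdots\eta_q\kappa_q\ \sim_M\ \eta_1'\eta_2'\cdots\eta_q'.\]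
   Context: $\sigma_1,\sigma_2,\dots$ denote the standard Artin generators of the braid groups. Two braids (possibly with different numbers of strands) are Markov equivalent, written $\sim_M$, if their closures are isotopic links. *)

theory Defs
  imports Main
begin

text \<open>A letter (i, True) stands for the Artin generator sigma_i, (i, False) for its inverse.
  A braid word on n strands uses only indices 1 \<le> i \<le> n - 1.\<close>

type_synonym bletter = "nat \<times> bool"
type_synonym bword = "bletter list"

definition valid_word :: "nat \<Rightarrow> bword \<Rightarrow> bool" where
  "valid_word n w \<longleftrightarrow> (\<forall>x \<in> set w. 1 \<le> fst x \<and> fst x < n)"

inductive braid_eq :: "nat \<Rightarrow> bword \<Rightarrow> bword \<Rightarrow> bool" for n :: nat where
  refl: "valid_word n w \<Longrightarrow> braid_eq n w w"
| sym: "braid_eq n u v \<Longrightarrow> braid_eq n v u"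
| trans: "braid_eq n u v \<Longrightarrow> braid_eq n v w \<Longrightarrow> braid_eq n u w"
| cancel: "valid_word n (u @ v) \<Longrightarrow> 1 \<le> i \<Longrightarrow> i < n \<Longrightarrow>
      braid_eq n (u @ [(i, e), (i, \<not> e)] @ v) (u @ v)"
| far_comm: "valid_word n (u @ v) \<Longrightarrow> 1 \<le> i \<Longrightarrow> i < n \<Longrightarrow> 1 \<le> j \<Longrightarrow> j < n \<Longrightarrow>
      i + 1 < j \<Longrightarrow> braid_eq n (u @ [(i, e), (j, f)] @ v) (u @ [(j, f), (i, e)] @ v)"
| braid_rel: "valid_word n (u @ v) \<Longrightarrow> 1 \<le> i \<Longrightarrow> i + 1 < n \<Longrightarrow>
      braid_eq n (u @ [(i, True), (i + 1, True), (i, True)] @ v)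
                 (u @ [(i + 1, True), (i, True), (i + 1, True)] @ v)"

text \<open>By Markov's theorem this is exactly the relation
  "the closures are isotopic links".\<close>

inductive markov_eq :: "nat \<times> bword \<Rightarrow> nat \<times> bword \<Rightarrow> bool" (infix "\<sim>\<^sub>M" 50) where
  braid: "braid_eq n w w' \<Longrightarrow> (n, w) \<sim>\<^sub>M (n, w')"
| conj: "valid_word n (a @ b) \<Longrightarrow> (n, a @ b) \<sim>\<^sub>M (n, b @ a)"
| stab: "valid_word n w \<Longrightarrow> 1 \<le> n \<Longrightarrow> (n, w) \<sim>\<^sub>M (Suc n, w @ [(n, e)])"
| sym: "x \<sim>\<^sub>M y \<Longrightarrow> y \<sim>\<^sub>M x"
| trans: "x \<sim>\<^sub>M y \<Longrightarrow> y \<sim>\<^sub>M z \<Longrightarrow> x \<sim>\<^sub>M z"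

definition gen :: "nat \<Rightarrow> int \<Rightarrow> bletter" where
  "gen i g = (i, g = 1)"

definition eta' :: "nat \<Rightarrow> nat \<Rightarrow> (nat \<Rightarrow> nat \<Rightarrow> int) \<Rightarrow> nat \<Rightarrow> bword" where
  "eta' p q g i = map (\<lambda>j. gen j (g i j)) [1..<p - q]"

definition eta :: "nat \<Rightarrow> nat \<Rightarrow> (nat \<Rightarrow> nat \<Rightarrow> int) \<Rightarrow> nat \<Rightarrow> bword" where
  "eta p q g i = eta' p q g i @ [gen (p - q) (g i (p - q))]"

definition kappa :: "nat \<Rightarrow> nat \<Rightarrow> nat \<Rightarrow> bword" where
  "kappa p q i = map (\<lambda>k. (k, False)) [p - q + 1..<p - i + 1] @ map (\<lambda>k. (k, True)) [p - i + 1..<p]"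

end

theory Submission
  imports Defs
begin

(* Induction on q, keeping m = p - q fixed.  The last factor of the p-strand word is
   eta_q kappa_q with kappa_q = sigma_(m+1) ... sigma_(p-1) =: K.  Moving the inverses of the tails
   sigma_(p-i) ... sigma_(p-1) to the right through the factors one at a time turns every kappa_i
   with i < q into the kappa_i of the pair (p - 1, q - 1), and leaves K^-1 in front of
   eta_q' sigma_m^(+-1) K.  Since K^-1 sigma_m^(+-1) K = H sigma_(p-1)^(+-1) H^-1 with
   H = sigma_m ... sigma_(p-2), a conjugation and a destabilisation remove strand p, and rotating
   eta_q' to the front gives a word of the same shape for (p - 1, q - 1) with eta_q' absorbed into
   the first factor. *)

definition inv_word :: "bword \<Rightarrow> bword" where
  "inv_word w = rev (map (\<lambda>x. (fst x, \<not> snd x)) w)"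

definition asc_word :: "nat \<Rightarrow> nat \<Rightarrow> bword" where
  "asc_word a r = map (\<lambda>k. (k, True)) [a..<a + r]"

definition far_letters :: "bletter \<Rightarrow> bletter \<Rightarrow> bool" where
  "far_letters x y \<longleftrightarrow> fst x + 1 < fst y \<or> fst y + 1 < fst x"

lemma valid_word_Nil [simp]: "valid_word n []"
  by (simp add: valid_word_def)

lemma valid_word_append [simp]: "valid_word n (u @ v) \<longleftrightarrow> valid_word n u \<and> valid_word n v"
  by (auto simp: valid_word_def)

lemma valid_word_Cons [simp]: "valid_word n (x # w) \<longleftrightarrow> 1 \<le> fst x \<and> fst x < n \<and> valid_word n w"
  by (auto simp: valid_word_def)

lemma valid_word_concat [simp]: "valid_word n (concat ws) \<longleftrightarrow> (\<forall>w \<in> set ws. valid_word n w)"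
  by (auto simp: valid_word_def)

lemma valid_word_mono: "valid_word n w \<Longrightarrow> n \<le> n' \<Longrightarrow> valid_word n' w"
  by (auto simp: valid_word_def)

lemma inv_word_Nil [simp]: "inv_word [] = []"
  by (simp add: inv_word_def)

lemma inv_word_append [simp]: "inv_word (u @ v) = inv_word v @ inv_word u"
  by (simp add: inv_word_def)

lemma inv_word_Cons: "inv_word (x # w) = inv_word w @ [(fst x, \<not> snd x)]"
  by (simp add: inv_word_def)

lemma inv_word_inv_word [simp]: "inv_word (inv_word w) = w"
  by (induction w) (auto simp: inv_word_def)

lemma set_inv_word: "set (inv_word w) = (\<lambda>x. (fst x, \<not> snd x)) ` set w"
  by (simp add: inv_word_def)

lemma valid_word_inv_word [simp]: "valid_word n (inv_word w) \<longleftrightarrow> valid_word n w"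
  by (auto simp: valid_word_def inv_word_def)

lemma asc_word_0 [simp]: "asc_word a 0 = []"
  by (simp add: asc_word_def)

lemma asc_word_Suc: "asc_word a (Suc r) = asc_word a r @ [(a + r, True)]"
  by (simp add: asc_word_def)

lemma set_asc_word: "set (asc_word a r) = (\<lambda>k. (k, True)) ` {a..<a + r}"
  by (simp add: asc_word_def)

lemma valid_word_asc_word: "1 \<le> a \<Longrightarrow> a + r \<le> n \<Longrightarrow> valid_word n (asc_word a r)"
  by (auto simp: asc_word_def valid_word_def)

lemmas [trans] = braid_eq.trans markov_eq.trans

lemma braid_eq_valid: "braid_eq n u v \<Longrightarrow> valid_word n u \<and> valid_word n v"
  by (induction rule: braid_eq.induct) auto

lemma braid_eq_context:
  "braid_eq n u v \<Longrightarrow> valid_word n a \<Longrightarrow> valid_word n b \<Longrightarrow> braid_eq n (a @ u @ b) (a @ v @ b)"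
proof (induction rule: braid_eq.induct)
  case (refl w)
  then show ?case by (auto intro: braid_eq.refl)
next
  case (sym u v)
  then show ?case by (auto intro: braid_eq.sym)
next
  case (trans u v w)
  then show ?case by (auto intro: braid_eq.trans)
next
  case (cancel u v i e)
  then show ?case using braid_eq.cancel[of n "a @ u" "v @ b" i e] by simp
next
  case (far_comm u v i j e f)
  then show ?case using braid_eq.far_comm[of n "a @ u" "v @ b" i j e f] by simp
next
  case (braid_rel u v i)
  then show ?case using braid_eq.braid_rel[of n "a @ u" "v @ b" i] by simp
qed

lemma braid_eq_append_left: "braid_eq n u v \<Longrightarrow> valid_word n a \<Longrightarrow> braid_eq n (a @ u) (a @ v)"
  using braid_eq_context[of n u v a "[]"] by simp

lemma braid_eq_append_right: "braid_eq n u v \<Longrightarrow> valid_word n b \<Longrightarrow> braid_eq n (u @ b) (v @ b)"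
  using braid_eq_context[of n u v "[]" b] by simp

lemma braid_eq_append: "braid_eq n u u' \<Longrightarrow> braid_eq n v v' \<Longrightarrow> braid_eq n (u @ v) (u' @ v')"
  by (meson braid_eq.trans braid_eq_append_left braid_eq_append_right braid_eq_valid)

lemma braid_eq_commute_letter:
  assumes "valid_word n (x # w)" and "\<forall>y \<in> set w. far_letters x y"
  shows "braid_eq n (x # w) (w @ [x])"
  using assms
proof (induction w)
  case Nil
  then show ?case by (auto intro: braid_eq.refl)
next
  case (Cons y w)
  obtain i e j f where xy: "x = (i, e)" "y = (j, f)" by fastforce
  have "braid_eq n (x # y # w) (y # x # w)"
  proof (cases "i + 1 < j")
    case True
    then show ?thesis using braid_eq.far_comm[of n "[]" w i j e f] Cons.prems by (simp add: xy)
  next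
    case False
    then have "j + 1 < i" using Cons.prems by (simp add: xy far_letters_def)
    then show ?thesis using braid_eq.far_comm[of n "[]" w j i f e] Cons.prems
      by (auto simp: xy intro: braid_eq.sym)
  qed
  also have "braid_eq n (y # x # w) (y # w @ [x])"
    using braid_eq_append_left[of n "x # w" "w @ [x]" "[y]"] Cons by simp
  finally show ?case by simp
qed

lemma braid_eq_commute:
  assumes "valid_word n u" and "valid_word n v" and "\<forall>x \<in> set u. \<forall>y \<in> set v. far_letters x y"
  shows "braid_eq n (u @ v) (v @ u)"
  using assms
proof (induction u)
  case Nil
  then show ?case by (auto intro: braid_eq.refl)
next
  case (Cons x u)
  have "braid_eq n (x # u @ v) (x # v @ u)"
    using braid_eq_append_left[of n "u @ v" "v @ u" "[x]"] Cons by simp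
  also have "braid_eq n (x # v @ u) (v @ x # u)"
    using braid_eq_append_right[OF braid_eq_commute_letter[of n x v]] Cons.prems by simp
  finally show ?case by simp
qed

lemma braid_eq_cancel_inv_word: "valid_word n w \<Longrightarrow> braid_eq n (w @ inv_word w) []"
proof (induction w)
  case Nil
  then show ?case by (auto intro: braid_eq.refl)
next
  case (Cons x w)
  have "braid_eq n ([x] @ (w @ inv_word w) @ [(fst x, \<not> snd x)]) ([x] @ [] @ [(fst x, \<not> snd x)])"
    using Cons by (intro braid_eq_context) auto
  also have "braid_eq n ([x] @ [] @ [(fst x, \<not> snd x)]) []"
    using Cons.prems braid_eq.cancel[of n "[]" "[]" "fst x" "snd x"] by simp
  finally show ?case by (simp add: inv_word_Cons)
qed

lemma braid_eq_inv_word: "braid_eq n u v \<Longrightarrow> braid_eq n (inv_word u) (inv_word v)"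
proof -
  assume uv: "braid_eq n u v"
  then have vu: "valid_word n u" "valid_word n v" by (auto dest: braid_eq_valid)
  have "braid_eq n (inv_word u) (inv_word u @ v @ inv_word v)"
    using braid_eq_append_left[OF braid_eq.sym[OF braid_eq_cancel_inv_word[of n v]], of "inv_word u"] vu
    by simp
  also have "braid_eq n (inv_word u @ v @ inv_word v) (inv_word u @ u @ inv_word v)"
    using vu by (intro braid_eq_context braid_eq_append_right braid_eq.sym[OF uv]) auto
  also have "braid_eq n (inv_word u @ u @ inv_word v) ([] @ inv_word v)"
    using braid_eq_append_right[OF braid_eq_cancel_inv_word[of n "inv_word u"]] vu by simp
  finally show ?thesis by simp
qed

lemma braid_eq_conj_generator:
  assumes "1 \<le> i" and "i + 1 < n"
  shows "braid_eq n [(i + 1, False), (i, e), (i + 1, True)] [(i, True), (i + 1, e), (i, False)]"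
proof -
  have pos: "braid_eq n [(i + 1, False), (i, True), (i + 1, True)] [(i, True), (i + 1, True), (i, False)]"
  proof -
    have "braid_eq n [(i + 1, False), (i, True), (i + 1, True)]
                     ([(i + 1, False), (i, True), (i + 1, True)] @ [(i, True), (i, False)])"
      using braid_eq.cancel[of n "[(i + 1, False), (i, True), (i + 1, True)]" "[]" i True] assms
      by (auto intro: braid_eq.sym)
    also have "braid_eq n \<dots> ([(i + 1, False)] @ [(i + 1, True), (i, True), (i + 1, True)] @ [(i, False)])"
      using braid_eq.braid_rel[of n "[(i + 1, False)]" "[(i, False)]" i] assms by simp
    also have "braid_eq n \<dots> [(i, True), (i + 1, True), (i, False)]"
      using braid_eq.cancel[of n "[]" "[(i, True), (i + 1, True), (i, False)]" "i + 1" False] assms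
      by simp
    finally show ?thesis .
  qed
  show ?thesis
  proof (cases e)
    case False
    with braid_eq_inv_word[OF pos] show ?thesis by (simp add: inv_word_def)
  qed (use pos in simp)
qed

lemma braid_eq_conj_asc_word:
  assumes "1 \<le> b" and "b + r < n"
  shows "braid_eq n (inv_word (asc_word (b + 1) r) @ [(b, e)] @ asc_word (b + 1) r)
                    (asc_word b r @ [(b + r, e)] @ inv_word (asc_word b r))"
  using assms
proof (induction r)
  case 0
  then show ?case by (auto intro: braid_eq.refl)
next
  case (Suc r)
  define x where "x = b + r + 1"
  define A where "A = asc_word b r"
  have vA: "valid_word n A" using Suc.prems by (auto simp: A_def intro: valid_word_asc_word)
  have "inv_word (asc_word (b + 1) (Suc r)) @ [(b, e)] @ asc_word (b + 1) (Suc r)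
      = [(x, False)] @ (inv_word (asc_word (b + 1) r) @ [(b, e)] @ asc_word (b + 1) r) @ [(x, True)]"
    by (simp add: asc_word_Suc inv_word_def x_def)
  also have "braid_eq n \<dots> ([(x, False)] @ (A @ [(b + r, e)] @ inv_word A) @ [(x, True)])"
    using Suc by (intro braid_eq_context) (auto simp: A_def x_def)
  also have "braid_eq n \<dots> ((A @ [(x, False)]) @ [(b + r, e)] @ ([(x, True)] @ inv_word A))"
  proof -
    have far: "\<forall>y \<in> set A. far_letters (x, f) y" for f
      by (auto simp: A_def set_asc_word far_letters_def x_def)
    have left: "braid_eq n ([(x, False)] @ A) (A @ [(x, False)])"
      using braid_eq_commute_letter[of n "(x, False)" A] far vA Suc.prems by (simp add: x_def)
    have right: "braid_eq n (inv_word A @ [(x, True)]) ([(x, True)] @ inv_word A)"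
      using braid_eq_commute_letter[of n "(x, True)" "inv_word A"] far vA Suc.prems
      by (auto simp: x_def set_inv_word far_letters_def intro: braid_eq.sym)
    have middle: "braid_eq n [(b + r, e)] [(b + r, e)]"
      using Suc.prems by (auto intro: braid_eq.refl)
    show ?thesis using braid_eq_append[OF left braid_eq_append[OF middle right]] by simp
  qed
  also have "braid_eq n \<dots> (A @ [(b + r, True), (x, e), (b + r, False)] @ inv_word A)"
    using braid_eq_context[OF braid_eq_conj_generator[of "b + r" n e] vA, of "inv_word A"] Suc.prems vA
    by (simp add: x_def)
  also have "\<dots> = asc_word b (Suc r) @ [(b + Suc r, e)] @ inv_word (asc_word b (Suc r))"
    by (simp add: A_def asc_word_Suc inv_word_def x_def)
  finally show ?case .
qed

lemma braid_eq_conj_asc_word_far: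
  assumes "1 \<le> c" and "c + r < n" and "valid_word c w"
  shows "braid_eq n (inv_word (asc_word (c + 1) r) @ w @ [(c, e)] @ asc_word (c + 1) r)
                    (w @ asc_word c r @ [(c + r, e)] @ inv_word (asc_word c r))"
proof -
  have vw: "valid_word n w" using assms by (auto intro: valid_word_mono)
  have vC: "valid_word n (inv_word (asc_word (c + 1) r))"
    using assms by (auto intro: valid_word_asc_word)
  have "braid_eq n (inv_word (asc_word (c + 1) r) @ w) (w @ inv_word (asc_word (c + 1) r))"
    using assms(3) by (intro braid_eq_commute vw vC)
      (auto simp: set_inv_word set_asc_word far_letters_def valid_word_def)
  from braid_eq_append_right[OF this, of "[(c, e)] @ asc_word (c + 1) r"]
  have "braid_eq n (inv_word (asc_word (c + 1) r) @ w @ [(c, e)] @ asc_word (c + 1) r)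
                   (w @ inv_word (asc_word (c + 1) r) @ [(c, e)] @ asc_word (c + 1) r)"
    using assms by (simp add: valid_word_asc_word)
  also have "braid_eq n \<dots> (w @ asc_word c r @ [(c + r, e)] @ inv_word (asc_word c r))"
    using braid_eq_conj_asc_word[OF assms(1,2)] vw by (rule braid_eq_append_left)
  finally show ?thesis .
qed

lemma valid_word_kappa: "1 \<le> i \<Longrightarrow> valid_word p (kappa p q i)"
  by (auto simp: kappa_def valid_word_def)

lemma kappa_last: "1 \<le> q \<Longrightarrow> q \<le> p \<Longrightarrow> kappa p q q = asc_word (p - q + 1) (q - 1)"
  by (simp add: kappa_def asc_word_def)

lemma kappa_split:
  assumes "1 \<le> j" and "j < q" and "q < p"
  shows "kappa p q j = map (\<lambda>k. (k, False)) [p - q + 1..<p - j] @ [(p - j, False)]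
                         @ asc_word (p - j + 1) (j - 1)"
proof -
  have "[p - q + 1..<p - j + 1] = [p - q + 1..<p - j] @ [p - j]"
    using assms by simp
  then show ?thesis using assms by (simp add: kappa_def asc_word_def del: upt_Suc)
qed

lemma kappa_pred_split:
  assumes "1 \<le> j" and "j < q" and "q < p"
  shows "kappa (p - 1) (q - 1) j = map (\<lambda>k. (k, False)) [p - q + 1..<p - j] @ asc_word (p - j) (j - 1)"
  using assms by (simp add: kappa_def asc_word_def Suc_diff_Suc)

lemma braid_eq_telescope:
  assumes "X 0 = []"
    and "\<And>i. 1 \<le> i \<Longrightarrow> i \<le> k \<Longrightarrow> braid_eq n (inv_word (X (i - 1)) @ a i) (b i @ inv_word (X i))"
  shows "braid_eq n (concat (map a [1..<k + 1])) (concat (map b [1..<k + 1]) @ inv_word (X k))"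
  using assms(2)
proof (induction k)
  case 0
  then show ?case using assms(1) by (auto intro: braid_eq.refl)
next
  case (Suc k)
  have step: "braid_eq n (inv_word (X k) @ a (Suc k)) (b (Suc k) @ inv_word (X (Suc k)))"
    using Suc.prems[of "Suc k"] by simp
  have IH: "braid_eq n (concat (map a [1..<k + 1])) (concat (map b [1..<k + 1]) @ inv_word (X k))"
    using Suc by simp
  have "concat (map a [1..<Suc k + 1]) = concat (map a [1..<k + 1]) @ a (Suc k)"
    by simp
  also have "braid_eq n \<dots> ((concat (map b [1..<k + 1]) @ inv_word (X k)) @ a (Suc k))"
    using IH braid_eq_valid[OF step] by (intro braid_eq_append_right) auto
  also have "braid_eq n \<dots> (concat (map b [1..<k + 1]) @ b (Suc k) @ inv_word (X (Suc k)))"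
    using braid_eq_append_left[OF step, of "concat (map b [1..<k + 1])"] braid_eq_valid[OF IH]
    by simp
  finally show ?case by simp
qed

lemma braid_eq_shift_kappa:
  assumes "1 \<le> j" and "j < q" and "q < p" and "valid_word (p - q + 1) w"
  shows "braid_eq p (inv_word (asc_word (p - (j - 1)) (j - 1)) @ w @ kappa p q j)
                    ((w @ kappa (p - 1) (q - 1) j) @ inv_word (asc_word (p - j) j))"
proof -
  define c where "c = p - j"
  define D where "D = map (\<lambda>k. (k, False)) [p - q + 1..<c]"
  have "valid_word c (w @ D)"
    using assms by (auto simp: D_def c_def valid_word_def)
  then have "braid_eq p (inv_word (asc_word (c + 1) (j - 1)) @ (w @ D) @ [(c, False)] @ asc_word (c + 1) (j - 1))
      ((w @ D) @ asc_word c (j - 1) @ [(c + (j - 1), False)] @ inv_word (asc_word c (j - 1)))"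
    using assms by (intro braid_eq_conj_asc_word_far) (auto simp: c_def)
  moreover have "asc_word c j = asc_word c (j - 1) @ [(c + (j - 1), True)]"
    using asc_word_Suc[of c "j - 1"] assms(1) by simp
  ultimately show ?thesis
    using assms kappa_split[OF assms(1-3)] kappa_pred_split[OF assms(1-3)]
    by (simp add: D_def c_def inv_word_def Suc_diff_le)
qed

lemma concat_map_upt_fun_upd:
  assumes "a < b"
  shows "concat (map (f(a := x @ f a)) [a..<b]) = x @ concat (map f [a..<b])"
proof -
  have "map (f(a := x @ f a)) [Suc a..<b] = map f [Suc a..<b]"
    by (intro map_cong) auto
  with assms show ?thesis by (simp add: upt_conv_Cons)
qed

definition kappa_product :: "nat \<Rightarrow> nat \<Rightarrow> (nat \<Rightarrow> bword) \<Rightarrow> bword" where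
  "kappa_product p q W = concat (map (\<lambda>i. W i @ kappa p q i) [1..<q + 1])"

lemma braid_eq_kappa_prefix:
  assumes "1 \<le> q" and "q < p" and "\<And>i. 1 \<le> i \<Longrightarrow> i < q \<Longrightarrow> valid_word (p - q + 1) (W i)"
  shows "braid_eq p (concat (map (\<lambda>i. W i @ kappa p q i) [1..<q]))
           (concat (map (\<lambda>i. W i @ kappa (p - 1) (q - 1) i) [1..<q]) @ inv_word (asc_word (p - q + 1) (q - 1)))"
proof -
  have "braid_eq p (concat (map (\<lambda>i. W i @ kappa p q i) [1..<(q - 1) + 1]))
      (concat (map (\<lambda>i. W i @ kappa (p - 1) (q - 1) i) [1..<(q - 1) + 1]) @ inv_word (asc_word (p - (q - 1)) (q - 1)))"
  proof (rule braid_eq_telescope[where X = "\<lambda>i. asc_word (p - i) i"])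
    fix i assume "1 \<le> i" and "i \<le> q - 1"
    then show "braid_eq p (inv_word (asc_word (p - (i - 1)) (i - 1)) @ W i @ kappa p q i)
        ((W i @ kappa (p - 1) (q - 1) i) @ inv_word (asc_word (p - i) i))"
      using assms by (intro braid_eq_shift_kappa) auto
  qed simp
  then show ?thesis using assms(1,2) by (simp add: Suc_diff_le)
qed

lemma markov_eq_destab_conj:
  assumes "1 \<le> n" and "valid_word n X" and "valid_word n H"
  shows "(Suc n, X @ H @ [(n, e)] @ inv_word H) \<sim>\<^sub>M (n, X)"
proof -
  have vX: "valid_word (Suc n) X" and vH: "valid_word (Suc n) H"
    using assms by (auto intro: valid_word_mono)
  have "(Suc n, X @ H @ [(n, e)] @ inv_word H) \<sim>\<^sub>M (Suc n, inv_word H @ X @ H @ [(n, e)])"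
    using markov_eq.conj[of "Suc n" "X @ H @ [(n, e)]" "inv_word H"] vX vH assms(1) by simp
  also have "(Suc n, inv_word H @ X @ H @ [(n, e)]) \<sim>\<^sub>M (n, inv_word H @ X @ H)"
    using markov_eq.sym[OF markov_eq.stab[of n "inv_word H @ X @ H" e]] assms by simp
  also have "(n, inv_word H @ X @ H) \<sim>\<^sub>M (n, H @ inv_word H @ X)"
    using markov_eq.conj[of n "inv_word H @ X" H] assms by simp
  also have "(n, H @ inv_word H @ X) \<sim>\<^sub>M (n, X)"
    using markov_eq.braid[OF braid_eq_append_right[OF braid_eq_cancel_inv_word[OF assms(3)] assms(2)]]
    by simp
  finally show ?thesis .
qed

lemma markov_eq_kappa_product_step:
  assumes "2 \<le> q" and "q < p"
    and "\<And>i. 1 \<le> i \<Longrightarrow> i < q \<Longrightarrow> valid_word (p - q + 1) (W i)"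
    and "W q = V @ [(p - q, e)]" and "valid_word (p - q) V"
  shows "(p, kappa_product p q W) \<sim>\<^sub>M (p - 1, kappa_product (p - 1) (q - 1) (W(1 := V @ W 1)))"
proof -
  define m where "m = p - q"
  define P where "P = concat (map (\<lambda>i. W i @ kappa (p - 1) (q - 1) i) [1..<q])"
  define H where "H = asc_word m (q - 1)"
  have "valid_word (p - 1) (W i)" if "1 \<le> i" and "i < q" for i
    using valid_word_mono[OF assms(3)[OF that]] assms(1,2) by simp
  then have vP: "valid_word (p - 1) P"
    by (auto simp: P_def intro: valid_word_kappa)
  have vV: "valid_word (p - 1) V" and vH: "valid_word (p - 1) H"
    using assms by (auto simp: H_def m_def intro: valid_word_mono valid_word_asc_word)
  have "kappa_product p q W
      = concat (map (\<lambda>i. W i @ kappa p q i) [1..<q]) @ V @ [(m, e)] @ asc_word (m + 1) (q - 1)"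
    using assms(1,2,4) by (simp add: kappa_product_def kappa_last m_def)
  also have "braid_eq p \<dots> (P @ inv_word (asc_word (m + 1) (q - 1)) @ V @ [(m, e)] @ asc_word (m + 1) (q - 1))"
    using braid_eq_append_right[OF braid_eq_kappa_prefix[of q p W]] valid_word_mono[OF assms(5), of p] assms
    by (simp add: P_def m_def valid_word_asc_word)
  also have "braid_eq p \<dots> (P @ V @ H @ [(p - 1, e)] @ inv_word H)"
    using braid_eq_append_left[OF braid_eq_conj_asc_word_far[of m "q - 1" p V e]] vP assms
    by (simp add: H_def m_def valid_word_mono)
  finally have "(p, kappa_product p q W) \<sim>\<^sub>M (Suc (p - 1), (P @ V) @ H @ [(p - 1, e)] @ inv_word H)"
    using assms(2) by (auto intro: markov_eq.braid)
  also have "(Suc (p - 1), (P @ V) @ H @ [(p - 1, e)] @ inv_word H) \<sim>\<^sub>M (p - 1, P @ V)"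
    using assms vP vV vH by (intro markov_eq_destab_conj) auto
  also have "(p - 1, P @ V) \<sim>\<^sub>M (p - 1, V @ P)"
    using vP vV by (intro markov_eq.conj) simp
  also have "V @ P = kappa_product (p - 1) (q - 1) (W(1 := V @ W 1))"
  proof -
    have "(\<lambda>i. (W(1 := V @ W 1)) i @ kappa (p - 1) (q - 1) i)
        = (\<lambda>i. W i @ kappa (p - 1) (q - 1) i)(1 := V @ W 1 @ kappa (p - 1) (q - 1) 1)"
      by auto
    then show ?thesis
      using concat_map_upt_fun_upd[of 1 q "\<lambda>i. W i @ kappa (p - 1) (q - 1) i" V] assms(1)
      by (simp add: P_def kappa_product_def)
  qed
  finally show ?thesis .
qed

lemma markov_eq_kappa_product:
  assumes "1 \<le> q" and "q < p"
    and "\<And>i. 1 \<le> i \<Longrightarrow> i \<le> q \<Longrightarrow> W i = V i @ [(p - q, E i)]"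
    and "\<And>i. 1 \<le> i \<Longrightarrow> i \<le> q \<Longrightarrow> valid_word (p - q) (V i)"
  shows "(p, kappa_product p q W) \<sim>\<^sub>M (p - q, concat (map V [1..<q + 1]))"
  using assms
proof (induction q arbitrary: p W V)
  case 0
  then show ?case by simp
next
  case (Suc q)
  show ?case
  proof (cases "q = 0")
    case True
    have "kappa_product p 1 W = V 1 @ [(p - 1, E 1)]"
      using Suc.prems True by (simp add: kappa_product_def kappa_last)
    moreover have "(p - 1, V 1) \<sim>\<^sub>M (Suc (p - 1), V 1 @ [(p - 1, E 1)])"
      using Suc.prems True by (intro markov_eq.stab) auto
    ultimately show ?thesis
      using markov_eq.sym True Suc.prems(2) by fastforce
  next
    case False
    define W' where "W' = W(1 := V (Suc q) @ W 1)"
    define V' where "V' = V(1 := V (Suc q) @ V 1)"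
    have "valid_word (p - Suc q + 1) (W i)" if "1 \<le> i" and "i < Suc q" for i
      using Suc.prems(2) Suc.prems(3,4)[of i] that by (auto intro: valid_word_mono)
    then have "(p, kappa_product p (Suc q) W) \<sim>\<^sub>M (p - 1, kappa_product (p - 1) q W')"
      using markov_eq_kappa_product_step[of "Suc q" p W "V (Suc q)" "E (Suc q)"] Suc.prems False
      by (simp add: W'_def)
    also have "(p - 1, kappa_product (p - 1) q W') \<sim>\<^sub>M (p - 1 - q, concat (map V' [1..<q + 1]))"
    proof (rule Suc.IH)
      show "1 \<le> q" and "q < p - 1"
        using False Suc.prems(2) by auto
      show "W' i = V' i @ [(p - 1 - q, E i)]" if "1 \<le> i" and "i \<le> q" for i
        using Suc.prems(3)[of i] Suc.prems(3)[of "Suc q"] that by (auto simp: W'_def V'_def)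
      show "valid_word (p - 1 - q) (V' i)" if "1 \<le> i" and "i \<le> q" for i
        using Suc.prems(4)[of i] Suc.prems(4)[of "Suc q"] that by (auto simp: V'_def)
    qed
    also have "concat (map V' [1..<q + 1]) = V (Suc q) @ concat (map V [1..<q + 1])"
      using False by (simp add: V'_def concat_map_upt_fun_upd)
    also have "(p - 1 - q, V (Suc q) @ concat (map V [1..<q + 1]))
        \<sim>\<^sub>M (p - 1 - q, concat (map V [1..<q + 1]) @ V (Suc q))"
      using Suc.prems by (intro markov_eq.conj) auto
    finally show ?thesis by simp
  qed
qed

theorem lemma3p2:
  fixes p q :: nat and g :: "nat \<Rightarrow> nat \<Rightarrow> int"
  assumes "even p" and "even q" and "0 < q" and "q < p"
    and "\<And>i j. 1 \<le> i \<Longrightarrow> i \<le> q \<Longrightarrow> 1 \<le> j \<Longrightarrow> j \<le> p - q \<Longrightarrow> g i j \<in> {1, -1}"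
  shows "(p, concat (map (\<lambda>i. eta p q g i @ kappa p q i) [1..<q + 1]))
           \<sim>\<^sub>M (p - q, concat (map (\<lambda>i. eta' p q g i) [1..<q + 1]))"
proof -
  have "(p, kappa_product p q (eta p q g)) \<sim>\<^sub>M (p - q, concat (map (eta' p q g) [1..<q + 1]))"
  proof (rule markov_eq_kappa_product[where E = "\<lambda>i. g i (p - q) = 1"])
    show "eta p q g i = eta' p q g i @ [(p - q, g i (p - q) = 1)]" for i
      by (simp add: eta_def gen_def)
    show "valid_word (p - q) (eta' p q g i)" for i
      by (auto simp: eta'_def gen_def valid_word_def)
  qed (use assms(3,4) in auto)
  then show ?thesis by (simp add: kappa_product_def)
qed

end
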